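(* Let $u:[0,b)\to(0,\infty)$ be a solution of $\frac{u''}{1+(u')^2}=\frac{xu'}{2}-\frac u2+\frac{n-1}{u}$ with $u(0)<\sqrt{2(n-1)}$ and $u'(0)=0$. Then $u$ is strictly convex on $[0,b)$.
   Context: $n\ge2$ is a fixed integer. *)

theory Defs
  imports "HOL-Analysis.Analysis" "HOL-Library.Extended_Real"
begin

definition strictly_convex_on :: "real set \<Rightarrow> (real \<Rightarrow> real) \<Rightarrow> bool" where
  "strictly_convex_on S f \<longleftrightarrow>
     (\<forall>x\<in>S. \<forall>y\<in>S. x \<noteq> y \<longrightarrow> (\<forall>t::real. 0 < t \<and> t < 1 \<longrightarrow>
        f ((1 - t) * x + t * y) < (1 - t) * f x + t * f y))"

end

theory Submission
  imports Defs
begin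

text \<open>
  Since \<open>u > 0\<close>, the equation reads \<open>u'' = (1 + u'\<^sup>2) N / (2 u)\<close> with
  \<open>N = 2(n - 1) - u\<^sup>2 + x u u'\<close>, so strict convexity amounts to \<open>N > 0\<close>.
  The initial conditions give \<open>N(0) > 0\<close>. Differentiating, \<open>N' = M\<close> with \<open>M(0) = 0\<close> and
  \<open>M' = x (1 + u'\<^sup>2)/2 \<cdot> M + x u' u'' (N + 2)\<close>. As long as \<open>N > 0\<close> we have \<open>u'' > 0\<close>,
  hence \<open>u' \<ge> 0\<close>, so the last term is nonnegative and a Gronwall argument keeps \<open>M \<ge> 0\<close>.
  Thus \<open>N\<close> is nondecreasing while positive, and a real induction shows it never vanishes.
\<close>

lemma Ioo_subset_interior_if_connected:
  fixes A :: "real set"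
  assumes "connected A" "x \<in> A" "y \<in> A"
  shows "{x<..<y} \<subseteq> interior A"
  using connected_contains_Icc[OF assms] by (intro interior_maximal) auto

lemma MVT_interior:
  fixes f f' :: "real \<Rightarrow> real"
  assumes A: "connected A" "x \<in> A" "y \<in> A" and "x < y"
    and cont: "continuous_on A f"
    and deriv: "\<And>z. z \<in> interior A \<Longrightarrow> (f has_real_derivative f' z) (at z)"
  obtains \<xi> where "x < \<xi>" "\<xi> < y" "\<xi> \<in> interior A" "f y - f x = (y - x) * f' \<xi>"
proof -
  have Ioo: "z \<in> interior A" if "x < z" "z < y" for z
    using Ioo_subset_interior_if_connected[OF A] that by auto
  have "continuous_on {x..y} f"
    using continuous_on_subset[OF cont connected_contains_Icc[OF A]] .
  then have "\<exists>l \<xi>. x < \<xi> \<and> \<xi> < y \<and> (f has_real_derivative l) (at \<xi>) \<and> f y - f x = (y - x) * l"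
    using Ioo deriv real_differentiable_def by (intro MVT[OF \<open>x < y\<close>]) blast+
  then obtain l \<xi> where \<xi>: "x < \<xi>" "\<xi> < y" "(f has_real_derivative l) (at \<xi>)" "f y - f x = (y - x) * l"
    by blast
  have "l = f' \<xi>"
    using DERIV_unique[OF \<xi>(3) deriv[OF Ioo[OF \<xi>(1,2)]]] .
  then show ?thesis using that \<xi> Ioo by blast
qed

lemma strictly_convex_on_realI:
  fixes f f' :: "real \<Rightarrow> real"
  assumes "connected A" "continuous_on A f"
    and deriv: "\<And>x. x \<in> interior A \<Longrightarrow> (f has_real_derivative f' x) (at x)"
    and mono: "\<And>x y. x \<in> interior A \<Longrightarrow> y \<in> interior A \<Longrightarrow> x < y \<Longrightarrow> f' x < f' y"
  shows "strictly_convex_on A f"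
proof -
  have less: "f ((1 - t) * x + t * y) < (1 - t) * f x + t * f y"
    if xy: "x \<in> A" "y \<in> A" "x < y" and t: "0 < t" "t < 1" for x y t
  proof -
    define z where "z = (1 - t) * x + t * y"
    have zx: "z - x = t * (y - x)" and yz: "y - z = (1 - t) * (y - x)"
      by (simp_all add: z_def algebra_simps)
    have "0 < z - x" "0 < y - z"
      unfolding zx yz using xy t by simp_all
    then have "x < z" "z < y" by simp_all
    then have "z \<in> A" using connected_contains_Icc[OF \<open>connected A\<close> xy(1,2)] by auto
    obtain \<xi> where \<xi>: "\<xi> < z" "\<xi> \<in> interior A" "f z - f x = (z - x) * f' \<xi>"
      using MVT_interior[OF assms(1) xy(1) \<open>z \<in> A\<close> \<open>x < z\<close> assms(2) deriv] .
    obtain \<eta> where \<eta>: "z < \<eta>" "\<eta> \<in> interior A" "f y - f z = (y - z) * f' \<eta>"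
      using MVT_interior[OF assms(1) \<open>z \<in> A\<close> xy(2) \<open>z < y\<close> assms(2) deriv] .
    have "(1 - t) * (f z - f x) = t * (1 - t) * (y - x) * f' \<xi>"
      using \<xi>(3) zx by simp
    also have "\<dots> < t * (1 - t) * (y - x) * f' \<eta>"
      using mono[OF \<xi>(2) \<eta>(2)] \<xi>(1) \<eta>(1) xy(3) t by simp
    also have "\<dots> = t * (f y - f z)"
      using \<eta>(3) yz by simp
    finally show ?thesis by (simp add: z_def algebra_simps)
  qed
  show ?thesis
    unfolding strictly_convex_on_def
  proof (intro ballI allI impI)
    fix x y t :: real assume "x \<in> A" "y \<in> A" "x \<noteq> y" and t: "0 < t \<and> t < 1"
    show "f ((1 - t) * x + t * y) < (1 - t) * f x + t * f y"
    proof (cases "x < y")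
      case True then show ?thesis using less \<open>x \<in> A\<close> \<open>y \<in> A\<close> t by blast
    next
      case False
      then have "y < x" using \<open>x \<noteq> y\<close> by simp
      from less[OF \<open>y \<in> A\<close> \<open>x \<in> A\<close> this, of "1 - t"] t show ?thesis
        by (simp add: algebra_simps)
    qed
  qed
qed

lemma strictly_convex_on_second_deriv_pos:
  fixes f f' f'' :: "real \<Rightarrow> real"
  assumes "connected A" "continuous_on A f"
    and "\<And>x. x \<in> interior A \<Longrightarrow> (f has_real_derivative f' x) (at x)"
    and deriv2: "\<And>x. x \<in> interior A \<Longrightarrow> (f' has_real_derivative f'' x) (at x)"
    and pos: "\<And>x. x \<in> interior A \<Longrightarrow> f'' x > 0"
  shows "strictly_convex_on A f"
proof (rule strictly_convex_on_realI[OF assms(1-3)])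
  fix x y assume xy: "x \<in> interior A" "y \<in> interior A" "x < y"
  have "connected (interior A)"
    using \<open>connected A\<close> by (meson convex_connected convex_interior is_interval_connected_1 is_interval_convex_1)
  then have sub: "{x..y} \<subseteq> interior A"
    using connected_contains_Icc xy(1,2) by blast
  have cont: "continuous_on {x..y} f'"
  proof (rule DERIV_continuous_on)
    fix z assume "z \<in> {x..y}"
    then show "(f' has_real_derivative f'' z) (at z within {x..y})"
      using deriv2 sub has_field_derivative_at_within by blast
  qed
  have deriv_pos: "\<exists>l. (f' has_real_derivative l) (at z) \<and> l > 0" if "x < z" "z < y" for z
  proof -
    have "z \<in> interior A" using sub that by auto
    then show ?thesis using deriv2 pos by blast
  qed
  show "f' x < f' y"
    using DERIV_pos_imp_increasing_open[OF \<open>x < y\<close> deriv_pos cont] .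
qed

lemma pos_by_real_induction:
  fixes g :: "real \<Rightarrow> real"
  assumes "a \<le> y" and cont: "continuous_on {a..y} g"
    and step: "\<And>w. a \<le> w \<Longrightarrow> w \<le> y \<Longrightarrow> (\<And>t. a \<le> t \<Longrightarrow> t < w \<Longrightarrow> g t > 0) \<Longrightarrow> g w > 0"
  shows "g y > 0"
proof (rule ccontr)
  define Z where "Z = {t \<in> {a..y}. g t \<le> 0}"
  assume "\<not> g y > 0"
  then have "y \<in> Z" using \<open>a \<le> y\<close> by (simp add: Z_def)
  have "closed Z"
    unfolding Z_def using continuous_on_closed_Collect_le[OF cont continuous_on_const] by simp
  moreover have "bdd_below Z" by (rule bdd_belowI[of _ a]) (simp add: Z_def)
  ultimately have "Inf Z \<in> Z"
    using closed_contains_Inf \<open>y \<in> Z\<close> by blast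
  moreover have "g t > 0" if "a \<le> t" "t < Inf Z" for t
    using cInf_lower[OF _ \<open>bdd_below Z\<close>, of t] that \<open>Inf Z \<in> Z\<close> by (force simp: Z_def)
  ultimately show False
    using step[of "Inf Z"] by (force simp: Z_def)
qed

lemma nonneg_if_deriv_ge_mult:
  fixes f f' g :: "real \<Rightarrow> real"
  assumes "a \<le> w" "f a \<ge> 0"
    and cont_f: "continuous_on {a..w} f" and cont_g: "continuous_on {a..w} g"
    and deriv: "\<And>t. a < t \<Longrightarrow> t \<le> w \<Longrightarrow> (f has_real_derivative f' t) (at t)"
    and ge: "\<And>t. a < t \<Longrightarrow> t \<le> w \<Longrightarrow> f t < 0 \<Longrightarrow> f' t \<ge> g t * f t"
  shows "f w \<ge> 0"
proof (rule ccontr)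
  assume "\<not> f w \<ge> 0"
  obtain s where "\<forall>t\<in>{a..w}. g t \<le> g s"
    using continuous_attains_sup[OF _ _ cont_g] \<open>a \<le> w\<close> by auto
  then have g_le: "g t \<le> g s" if "a \<le> t" "t \<le> w" for t
    using that by auto
  define G where "G t = f t * exp (- (g s + 1) * t)" for t
  have "continuous_on {a..w} G"
    unfolding G_def by (intro continuous_intros cont_f)
  then obtain m where m: "m \<in> {a..w}" and G_min: "\<forall>t\<in>{a..w}. G m \<le> G t"
    using continuous_attains_inf[of "{a..w}" G] \<open>a \<le> w\<close> by auto
  have "G m \<le> G w" using G_min \<open>a \<le> w\<close> by auto
  also have "G w < 0" using \<open>\<not> f w \<ge> 0\<close> by (simp add: G_def mult_neg_pos)
  finally have "f m < 0" by (simp add: G_def mult_less_0_iff)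
  then have "a < m" "m \<le> w" using m \<open>f a \<ge> 0\<close> by (auto simp: less_eq_real_def)
  \<comment> \<open>The exponential weight turns \<open>f' \<ge> g f\<close> into a positive derivative of \<open>G\<close> where \<open>f < 0\<close>.\<close>
  have "(G has_real_derivative (f' m - (g s + 1) * f m) * exp (- (g s + 1) * m)) (at m)"
    unfolding G_def by (auto intro!: derivative_eq_intros deriv[OF \<open>a < m\<close> \<open>m \<le> w\<close>] simp: algebra_simps)
  moreover have "f' m - (g s + 1) * f m > 0"
  proof -
    have "g s * f m \<le> g m * f m"
      using g_le \<open>a < m\<close> \<open>m \<le> w\<close> \<open>f m < 0\<close> by (intro mult_right_mono_neg) auto
    moreover have "f' m - (g s + 1) * f m = (f' m - g m * f m) + (g m * f m - g s * f m) - f m"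
      by (simp add: algebra_simps)
    ultimately show ?thesis using ge[OF \<open>a < m\<close> \<open>m \<le> w\<close> \<open>f m < 0\<close>] \<open>f m < 0\<close>
      by linarith
  qed
  ultimately obtain d where "d > 0" and d: "\<And>h. 0 < h \<Longrightarrow> h < d \<Longrightarrow> G (m - h) < G m"
    using DERIV_pos_inc_left by (metis exp_gt_zero mult_pos_pos)
  define h where "h = min (d / 2) (m - a)"
  have "G (m - h) < G m" using d \<open>d > 0\<close> \<open>a < m\<close> by (simp add: h_def)
  moreover have "m - h \<in> {a..w}" using m \<open>d > 0\<close> \<open>a < m\<close> by (auto simp: h_def)
  ultimately show False using G_min by fastforce
qed

locale shrinker_profile =
  fixes n :: nat and b :: ereal and u u' u'' :: "real \<Rightarrow> real"
  assumes n: "n \<ge> 2"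
    and b: "b > 0"
    and deriv1: "\<And>x. 0 \<le> x \<Longrightarrow> ereal x < b \<Longrightarrow>
        (u has_real_derivative u' x) (at x within {x. 0 \<le> x \<and> ereal x < b})"
    and deriv2: "\<And>x. 0 \<le> x \<Longrightarrow> ereal x < b \<Longrightarrow>
        (u' has_real_derivative u'' x) (at x within {x. 0 \<le> x \<and> ereal x < b})"
    and pos: "\<And>x. 0 \<le> x \<Longrightarrow> ereal x < b \<Longrightarrow> u x > 0"
    and ode: "\<And>x. 0 \<le> x \<Longrightarrow> ereal x < b \<Longrightarrow>
        u'' x / (1 + (u' x)\<^sup>2) = x * u' x / 2 - u x / 2 + (real n - 1) / u x"
    and init: "u 0 < sqrt (2 * (real n - 1))"
    and init': "u' 0 = 0"
begin

abbreviation I :: "real set" where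
  "I \<equiv> {x. 0 \<le> x \<and> ereal x < b}"

lemma mem_I_downward: "x \<in> I \<Longrightarrow> 0 \<le> y \<Longrightarrow> y \<le> x \<Longrightarrow> y \<in> I"
  using ereal_less_eq(3) order.strict_trans1 by blast

lemma Icc_subset_I: "w \<in> I \<Longrightarrow> {0..w} \<subseteq> I"
  using mem_I_downward by auto

lemma zero_mem_I: "0 \<in> I"
  using b by (simp add: zero_ereal_def)

lemma connected_I: "connected I"
  using mem_I_downward by (intro is_interval_connected) (auto simp: is_interval_1)

lemma Ioo_subset_interior_I: "w \<in> I \<Longrightarrow> {0<..<w} \<subseteq> interior I"
  using Ioo_subset_interior_if_connected[OF connected_I zero_mem_I] .

lemma u_deriv: "x \<in> interior I \<Longrightarrow> (u has_real_derivative u' x) (at x)"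
  using deriv1[of x] interior_subset[of I] at_within_interior[of x I] by auto

lemma u'_deriv: "x \<in> interior I \<Longrightarrow> (u' has_real_derivative u'' x) (at x)"
  using deriv2[of x] interior_subset[of I] at_within_interior[of x I] by auto

lemma continuous_on_u: "continuous_on I u" and continuous_on_u': "continuous_on I u'"
  using deriv1 deriv2 by (auto intro!: DERIV_continuous_on)

definition numer :: "real \<Rightarrow> real" where
  "numer x = 2 * (real n - 1) - (u x)\<^sup>2 + x * u x * u' x"

definition numer' :: "real \<Rightarrow> real" where
  "numer' x = x * (1 + (u' x)\<^sup>2) * numer x / 2 - u' x * u x + x * (u' x)\<^sup>2"

lemma u''_eq:
  assumes x: "x \<in> I"
  shows "u'' x = (1 + (u' x)\<^sup>2) * numer x / (2 * u x)"
proof -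
  have "1 + (u' x)\<^sup>2 > 0" by (simp add: add_pos_nonneg)
  with ode[of x] pos[of x] x show ?thesis
    by (simp add: numer_def field_simps power2_eq_square)
qed

lemma u''_pos_iff: "x \<in> I \<Longrightarrow> u'' x > 0 \<longleftrightarrow> numer x > 0"
  using pos[of x] add_pos_nonneg[OF zero_less_one zero_le_power2[of "u' x"]]
  by (simp add: u''_eq zero_less_divide_iff zero_less_mult_iff)

lemma continuous_on_numer: "continuous_on I numer"
  unfolding numer_def[abs_def] by (intro continuous_intros continuous_on_u continuous_on_u')

lemma continuous_on_numer': "continuous_on I numer'"
  unfolding numer'_def[abs_def]
  by (auto intro!: continuous_intros continuous_on_u continuous_on_u' continuous_on_numer)

lemma numer_0_pos: "numer 0 > 0"
proof -
  have "(u 0)\<^sup>2 < (sqrt (2 * (real n - 1)))\<^sup>2"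
    using init pos[of 0] zero_mem_I by (intro power_strict_mono) auto
  then show ?thesis using n by (simp add: numer_def)
qed

lemma numer'_0: "numer' 0 = 0"
  by (simp add: numer'_def init')

lemma numer_deriv:
  assumes "x \<in> interior I"
  shows "(numer has_real_derivative numer' x) (at x)"
proof -
  have "x \<in> I" using assms interior_subset by blast
  have "(numer has_real_derivative - (2 * u x * u' x) + ((u x + x * u' x) * u' x + x * u x * u'' x)) (at x)"
    unfolding numer_def[abs_def]
    by (rule derivative_eq_intros refl u_deriv[OF assms] u'_deriv[OF assms])+ (simp add: algebra_simps)
  moreover have "x * u x * u'' x = x * (1 + (u' x)\<^sup>2) * numer x / 2"
    using u''_eq[OF \<open>x \<in> I\<close>] pos[of x] \<open>x \<in> I\<close> by (simp add: field_simps)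
  then have "- (2 * u x * u' x) + ((u x + x * u' x) * u' x + x * u x * u'' x) = numer' x"
    unfolding numer'_def by (simp add: algebra_simps power2_eq_square)
  ultimately show ?thesis by simp
qed

lemma numer'_deriv:
  assumes "x \<in> interior I"
  shows "(numer' has_real_derivative
           x * (1 + (u' x)\<^sup>2) / 2 * numer' x + x * u' x * u'' x * (numer x + 2)) (at x)"
proof -
  have "x \<in> I" using assms interior_subset by blast
  define e where "e = numer' x"
  have "(numer' has_real_derivative
      ((1 + (u' x)\<^sup>2) * numer x / 2 + x * (2 * u' x * u'' x) * numer x / 2 + x * (1 + (u' x)\<^sup>2) * e / 2)
      - (u'' x * u x + u' x * u' x) + ((u' x)\<^sup>2 + x * (2 * u' x * u'' x))) (at x)"
    unfolding numer'_def[abs_def]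
    by (auto intro!: derivative_eq_intros u_deriv[OF assms] u'_deriv[OF assms] numer_deriv[OF assms]
        simp: e_def field_simps power2_eq_square)
  moreover have "(1 + (u' x)\<^sup>2) * numer x / 2 = u'' x * u x"
    using u''_eq[OF \<open>x \<in> I\<close>] pos[of x] \<open>x \<in> I\<close> by (simp add: field_simps)
  then have "((1 + (u' x)\<^sup>2) * numer x / 2 + x * (2 * u' x * u'' x) * numer x / 2 + x * (1 + (u' x)\<^sup>2) * e / 2)
      - (u'' x * u x + u' x * u' x) + ((u' x)\<^sup>2 + x * (2 * u' x * u'' x))
      = x * (1 + (u' x)\<^sup>2) / 2 * numer' x + x * u' x * u'' x * (numer x + 2)"
    by (simp add: e_def algebra_simps power2_eq_square)
  ultimately show ?thesis by simp
qed

lemma u'_nonneg: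
  assumes "w \<in> I" and numer_pos: "\<And>t. 0 \<le> t \<Longrightarrow> t < w \<Longrightarrow> numer t > 0"
  shows "u' w \<ge> 0"
proof -
  have "u' 0 \<le> u' w"
  proof (rule DERIV_nonneg_imp_increasing_open[of 0 w u'])
    show "0 \<le> w" using \<open>w \<in> I\<close> by simp
    show "continuous_on {0..w} u'"
      using continuous_on_subset[OF continuous_on_u' Icc_subset_I[OF \<open>w \<in> I\<close>]] .
  next
    fix t assume t: "0 < t" "t < w"
    then have "t \<in> interior I" using Ioo_subset_interior_I[OF \<open>w \<in> I\<close>] by auto
    moreover have "u'' t > 0"
      using u''_pos_iff numer_pos t mem_I_downward[OF \<open>w \<in> I\<close>] by simp
    ultimately show "\<exists>y. (u' has_real_derivative y) (at t) \<and> 0 \<le> y"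
      using u'_deriv less_imp_le by blast
  qed
  then show ?thesis using init' by simp
qed

lemma numer'_nonneg:
  assumes s: "s \<in> interior I" and numer_pos: "\<And>t. 0 \<le> t \<Longrightarrow> t \<le> s \<Longrightarrow> numer t > 0"
  shows "numer' s \<ge> 0"
proof -
  have "s \<in> I" using s interior_subset by blast
  have sub: "{0..s} \<subseteq> I" using Icc_subset_I[OF \<open>s \<in> I\<close>] .
  have interior: "t \<in> interior I" if "0 < t" "t \<le> s" for t
    using Ioo_subset_interior_I[OF \<open>s \<in> I\<close>] s that by (cases "t = s") auto
  show ?thesis
  proof (rule nonneg_if_deriv_ge_mult[of 0 s numer' "\<lambda>t. t * (1 + (u' t)\<^sup>2) / 2"
      "\<lambda>t. t * (1 + (u' t)\<^sup>2) / 2 * numer' t + t * u' t * u'' t * (numer t + 2)"])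
    show "0 \<le> s" "0 \<le> numer' 0" using \<open>s \<in> I\<close> by (simp_all add: numer'_0)
    show "continuous_on {0..s} numer'"
      using continuous_on_subset[OF continuous_on_numer' sub] .
    show "continuous_on {0..s} (\<lambda>t. t * (1 + (u' t)\<^sup>2) / 2)"
      using continuous_on_subset[OF continuous_on_u' sub] by (auto intro!: continuous_intros)
  next
    fix t assume t: "0 < t" "t \<le> s"
    show "(numer' has_real_derivative
            t * (1 + (u' t)\<^sup>2) / 2 * numer' t + t * u' t * u'' t * (numer t + 2)) (at t)"
      using numer'_deriv[OF interior[OF t]] .
    have "t \<in> I" using sub t by (meson atLeastAtMost_iff less_imp_le subsetD)
    have "u' t \<ge> 0" using u'_nonneg[OF \<open>t \<in> I\<close>] numer_pos t by simp
    moreover have "u'' t > 0" "numer t > 0"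
      using u''_pos_iff[OF \<open>t \<in> I\<close>] numer_pos t by auto
    ultimately have "t * u' t * u'' t * (numer t + 2) \<ge> 0"
      using t by simp
    then show "t * (1 + (u' t)\<^sup>2) / 2 * numer' t
        \<le> t * (1 + (u' t)\<^sup>2) / 2 * numer' t + t * u' t * u'' t * (numer t + 2)"
      by simp
  qed
qed

lemma numer_pos:
  assumes "w \<in> I"
  shows "numer w > 0"
proof (rule pos_by_real_induction[of 0 w numer])
  show "0 \<le> w" using \<open>w \<in> I\<close> by simp
  show "continuous_on {0..w} numer"
    using continuous_on_subset[OF continuous_on_numer Icc_subset_I[OF \<open>w \<in> I\<close>]] .
  fix v assume v: "0 \<le> v" "v \<le> w" and below: "\<And>t. 0 \<le> t \<Longrightarrow> t < v \<Longrightarrow> numer t > 0"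
  have "v \<in> I" using mem_I_downward[OF \<open>w \<in> I\<close> v] .
  have "numer 0 \<le> numer v"
  proof (rule DERIV_nonneg_imp_increasing_open[of 0 v numer])
    show "continuous_on {0..v} numer"
      using continuous_on_subset[OF continuous_on_numer Icc_subset_I[OF \<open>v \<in> I\<close>]] .
    show "0 \<le> v" by fact
  next
    fix t assume t: "0 < t" "t < v"
    then have "t \<in> interior I" using Ioo_subset_interior_I[OF \<open>v \<in> I\<close>] by auto
    moreover have "numer' t \<ge> 0" using numer'_nonneg[OF \<open>t \<in> interior I\<close>] below t by simp
    ultimately show "\<exists>y. (numer has_real_derivative y) (at t) \<and> 0 \<le> y"
      using numer_deriv by blast
  qed
  then show "numer v > 0" using numer_0_pos by simp
qed

theorem strictly_convex_on_u: "strictly_convex_on I u"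
proof (rule strictly_convex_on_second_deriv_pos[OF connected_I continuous_on_u u_deriv u'_deriv])
  fix x assume "x \<in> interior I"
  then have "x \<in> I" using interior_subset by blast
  then show "u'' x > 0" using u''_pos_iff numer_pos by simp
qed

end

theorem lemma2p9:
  fixes n :: nat and b :: ereal and u u' u'' :: "real \<Rightarrow> real"
  assumes n: "n \<ge> 2"
    and b: "b > 0"
    and deriv1: "\<And>x. 0 \<le> x \<Longrightarrow> ereal x < b \<Longrightarrow>
        (u has_real_derivative u' x) (at x within {x. 0 \<le> x \<and> ereal x < b})"
    and deriv2: "\<And>x. 0 \<le> x \<Longrightarrow> ereal x < b \<Longrightarrow>
        (u' has_real_derivative u'' x) (at x within {x. 0 \<le> x \<and> ereal x < b})"
    and pos: "\<And>x. 0 \<le> x \<Longrightarrow> ereal x < b \<Longrightarrow> u x > 0"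
    and ode: "\<And>x. 0 \<le> x \<Longrightarrow> ereal x < b \<Longrightarrow>
        u'' x / (1 + (u' x)\<^sup>2) = x * u' x / 2 - u x / 2 + (real n - 1) / u x"
    and init: "u 0 < sqrt (2 * (real n - 1))"
    and init': "u' 0 = 0"
  shows "strictly_convex_on {x. 0 \<le> x \<and> ereal x < b} u"
proof -
  interpret shrinker_profile n b u u' u''
    using assms by unfold_locales
  show ?thesis by (rule strictly_convex_on_u)
qed

end
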